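(* Let $\mathcal{X},\mathcal{Y}$ be finite, $P_X$ a distribution on $\mathcal{X}$, $P_{Y|X}$ a channel, $P_{XY}=P_XP_{Y|X}$ with $\mathcal{Y}$-marginal $P_Y$, and let $R>I(P_X,P_{Y|X})$. Then \[ \min_{Q_{XY}}\Big\{D(Q_{XY}\|P_{XY})+\tfrac12\big[R-D(Q_{XY}\|P_XQ_Y)\big]_+\Big\}=\max_{\lambda\in[1,2]}\Big\{\frac{\lambda-1}{\lambda}\big(R-I^{\mathsf{s}}_\lambda(P_X,P_{Y|X})\big)\Big\}, \] where the minimum is over all joint distributions $Q_{XY}$ on $\mathcal{X}\times\mathcal{Y}$, $Q_Y$ is the $\mathcal{Y}$-marginal of $Q_{XY}$, and $[f]_+=\max\{0,f\}$.
   Context: $D$ is relative entropy and $I(P_X,P_{Y|X})=D(P_{XY}\|P_XP_Y)$. Sibson's $\alpha$-mutual information is $I^{\mathsf{s}}_\lambda(P_X,P_{Y|X})=\frac{\lambda}{\lambda-1}\log\sum_{y}\big(\sum_xP_X(x)P_{Y|X}^\lambda(y|x)\big)^{1/\lambda}$ for $\lambda\neq1$, with $I^{\mathsf{s}}_1=I(P_X,P_{Y|X})$. Logarithms and exponentials use a common arbitrary base. *)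

theory Defs
  imports "HOL-Analysis.Analysis"
begin

definition is_dist :: "('a::finite \<Rightarrow> real) \<Rightarrow> bool" where
  "is_dist P \<longleftrightarrow> (\<forall>a. P a \<ge> 0) \<and> (\<Sum>a\<in>UNIV. P a) = 1"

definition is_channel :: "('a::finite \<Rightarrow> 'b::finite \<Rightarrow> real) \<Rightarrow> bool" where
  "is_channel W \<longleftrightarrow> (\<forall>x. is_dist (W x))"

definition joint :: "('a::finite \<Rightarrow> real) \<Rightarrow> ('a \<Rightarrow> 'b::finite \<Rightarrow> real) \<Rightarrow> 'a \<times> 'b \<Rightarrow> real" where
  "joint P W = (\<lambda>(x, y). P x * W x y)"

definition marg_X :: "('a::finite \<times> 'b::finite \<Rightarrow> real) \<Rightarrow> 'a \<Rightarrow> real" where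
  "marg_X Q = (\<lambda>x. \<Sum>y\<in>UNIV. Q (x, y))"

definition marg_Y :: "('a::finite \<times> 'b::finite \<Rightarrow> real) \<Rightarrow> 'b \<Rightarrow> real" where
  "marg_Y Q = (\<lambda>y. \<Sum>x\<in>UNIV. Q (x, y))"

definition prod_dist :: "('a \<Rightarrow> real) \<Rightarrow> ('b \<Rightarrow> real) \<Rightarrow> 'a \<times> 'b \<Rightarrow> real" where
  "prod_dist P Q = (\<lambda>(x, y). P x * Q y)"

definition rel_ent :: "real \<Rightarrow> ('a::finite \<Rightarrow> real) \<Rightarrow> ('a \<Rightarrow> real) \<Rightarrow> ereal" where
  "rel_ent b Q P =
     (if \<forall>a. Q a > 0 \<longrightarrow> P a > 0
      then ereal (\<Sum>a\<in>{a. Q a > 0}. Q a * log b (Q a / P a))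
      else \<infinity>)"

definition mut_info :: "real \<Rightarrow> ('a::finite \<Rightarrow> real) \<Rightarrow> ('a \<Rightarrow> 'b::finite \<Rightarrow> real) \<Rightarrow> ereal" where
  "mut_info b P W = rel_ent b (joint P W) (prod_dist P (marg_Y (joint P W)))"

definition sibson :: "real \<Rightarrow> real \<Rightarrow> ('a::finite \<Rightarrow> real) \<Rightarrow> ('a \<Rightarrow> 'b::finite \<Rightarrow> real) \<Rightarrow> ereal" where
  "sibson b l P W =
     (if l = 1 then mut_info b P W
      else ereal (l / (l - 1) *
        log b (\<Sum>y\<in>UNIV. (\<Sum>x\<in>UNIV. P x * W x y powr l) powr (1 / l))))"

end

theory Submission
  imports Defs
begin

(* For l >= 1 let A_l(y) = sum_x P(x) W(y|x)^l, S_l = sum_y A_l(y)^(1/l), and let Q_l be the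
   distribution proportional to P(x) W(y|x)^l A_l(y)^(1/l - 1), whose Y-marginal V_l is
   proportional to A_l^(1/l).  For every Q absolutely continuous w.r.t. P_XY,
     l D(Q||P_XY) - (l-1) D(Q||P_X Q_Y) + l log S_l = D(Q||Q_l) + (l-1) D(Q_Y||V_l) >= 0.
   Since Sibson's information is l/(l-1) log S_l and (l-1)/l <= 1/2 on [1,2], every value of the
   maximised expression lies below every value of the minimised one.  At l = 1,
   D(Q_l||P_X V_l) is the mutual information, which is below R; by continuity there is k in (1,2]
   with D(Q_k||P_X V_k) = R, or k = 2 and that divergence is at most R.  Either way Q_k and k
   make both expressions equal to (k-1)/k R - log S_k. *)

lemma sum_over_support:
  fixes q :: "'a::finite \<Rightarrow> real"
  assumes "\<And>a. q a \<ge> 0"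
  shows "(\<Sum>a\<in>{a. q a > 0}. q a * g a) = (\<Sum>a\<in>UNIV. q a * g a)"
proof (rule sum.mono_neutral_left)
  show "\<forall>a\<in>UNIV - {a. 0 < q a}. q a * g a = 0"
    using assms by (auto simp: not_less intro: antisym)
qed auto

definition rel_ent_sum :: "real \<Rightarrow> ('a::finite \<Rightarrow> real) \<Rightarrow> ('a \<Rightarrow> real) \<Rightarrow> real" where
  "rel_ent_sum b Q P = (\<Sum>a\<in>{a. Q a > 0}. Q a * log b (Q a / P a))"

lemma rel_ent_eq_rel_ent_sum:
  assumes "\<forall>a. Q a > 0 \<longrightarrow> P a > 0"
  shows "rel_ent b Q P = ereal (rel_ent_sum b Q P)"
  using assms by (simp add: rel_ent_def rel_ent_sum_def)

lemma rel_ent_not_abs_cont: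
  assumes "\<not> (\<forall>a. Q a > 0 \<longrightarrow> P a > 0)"
  shows "rel_ent b Q P = \<infinity>"
  using assms by (simp add: rel_ent_def)

lemma rel_ent_sum_self: "rel_ent_sum b Q Q = 0"
  by (simp add: rel_ent_sum_def)

lemma rel_ent_sum_nonneg:
  assumes b: "b > 1" and Q: "is_dist Q"
    and T: "\<And>a. T a \<ge> 0" "sum T UNIV \<le> 1" and abs_cont: "\<forall>a. Q a > 0 \<longrightarrow> T a > 0"
  shows "0 \<le> rel_ent_sum b Q T"
proof -
  define S where "S = {a. Q a > 0}"
  have ln_b: "ln b > 0" using b by simp
  have "(\<Sum>a\<in>S. (Q a - T a) / ln b) \<le> (\<Sum>a\<in>S. Q a * log b (Q a / T a))"
  proof (rule sum_mono)
    fix a assume "a \<in> S"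
    then have Qa: "Q a > 0" and Ta: "T a > 0" using abs_cont by (auto simp: S_def)
    have "ln (T a / Q a) \<le> T a / Q a - 1" using Qa Ta by (intro ln_le_minus_one) simp
    then have "Q a - T a \<le> Q a * ln (Q a / T a)"
      using Qa Ta by (simp add: ln_div field_simps)
    then show "(Q a - T a) / ln b \<le> Q a * log b (Q a / T a)"
      using ln_b by (simp add: log_def divide_right_mono)
  qed
  moreover have "(\<Sum>a\<in>S. (Q a - T a) / ln b) = (sum Q S - sum T S) / ln b"
    by (simp add: sum_divide_distrib[symmetric] sum_subtractf)
  moreover have "sum Q S = 1"
    using sum_over_support[of Q "\<lambda>_. 1"] Q by (simp add: is_dist_def S_def)
  moreover have "sum T S \<le> sum T UNIV" by (rule sum_mono2) (use T in auto)
  ultimately have "0 \<le> (\<Sum>a\<in>S. Q a * log b (Q a / T a))"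
    using T(2) ln_b by (smt (verit) divide_nonneg_pos)
  then show ?thesis by (simp add: rel_ent_sum_def S_def)
qed

lemma sum_UNIV_pair:
  fixes f :: "'a::finite \<times> 'b::finite \<Rightarrow> real"
  shows "(\<Sum>a\<in>UNIV. f a) = (\<Sum>y\<in>UNIV. \<Sum>x\<in>UNIV. f (x, y))"
proof -
  have "(\<Sum>a\<in>UNIV. f a) = (\<Sum>x\<in>UNIV. \<Sum>y\<in>UNIV. f (x, y))"
    by (simp add: sum.cartesian_product)
  also have "\<dots> = (\<Sum>y\<in>UNIV. \<Sum>x\<in>UNIV. f (x, y))" by (rule sum.swap)
  finally show ?thesis .
qed

lemma sum_marg_Y: "(\<Sum>a\<in>UNIV. Q a * g (snd a)) = (\<Sum>y\<in>UNIV. marg_Y Q y * g y)"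
  by (simp add: sum_UNIV_pair marg_Y_def sum_distrib_right)

lemma marg_Y_nonneg: "(\<And>a. Q a \<ge> 0) \<Longrightarrow> marg_Y Q y \<ge> 0"
  unfolding marg_Y_def by (simp add: sum_nonneg)

lemma le_marg_Y: "(\<And>a. Q a \<ge> 0) \<Longrightarrow> Q (x, y) \<le> marg_Y Q y"
  unfolding marg_Y_def by (rule member_le_sum[of x UNIV "\<lambda>x. Q (x, y)"]) auto

lemma marg_Y_pos_imp: "marg_Y Q y > 0 \<Longrightarrow> \<exists>x. Q (x, y) > 0"
  unfolding marg_Y_def by (metis not_le sum_nonpos)

lemma is_dist_marg_Y: "is_dist Q \<Longrightarrow> is_dist (marg_Y Q)"
  using sum_marg_Y[of Q "\<lambda>_. 1"] marg_Y_nonneg[of Q] by (auto simp: is_dist_def)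

lemma rel_ent_sum_marg_Y:
  assumes "\<And>a. Q a \<ge> 0"
  shows "rel_ent_sum b (marg_Y Q) V
    = (\<Sum>a\<in>{a. Q a > 0}. Q a * log b (marg_Y Q (snd a) / V (snd a)))"
proof -
  have "rel_ent_sum b (marg_Y Q) V = (\<Sum>y\<in>UNIV. marg_Y Q y * log b (marg_Y Q y / V y))"
    unfolding rel_ent_sum_def by (rule sum_over_support) (rule marg_Y_nonneg[OF assms])
  also have "\<dots> = (\<Sum>a\<in>{a. Q a > 0}. Q a * log b (marg_Y Q (snd a) / V (snd a)))"
    unfolding sum_over_support[OF assms] by (rule sum_marg_Y[symmetric])
  finally show ?thesis .
qed

lemma weighted_le_half_pos_part:
  fixes c x :: real
  assumes "0 \<le> c" "c \<le> 1/2"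
  shows "c * x \<le> 1/2 * max 0 x"
  using assms mult_right_mono[of c "1/2" x] mult_nonneg_nonpos[of c x] by (cases "x \<ge> 0") auto

lemma exists_crossing_or_right_end:
  fixes d :: "real \<Rightarrow> real"
  assumes "continuous_on {a..c} d" "a < c" "d a < r"
  obtains l where "a < l" "l \<le> c" "d l \<le> r" "d l = r \<or> l = c"
proof (cases "d c \<le> r")
  case True
  then show ?thesis using that assms(2) by blast
next
  case False
  then obtain l where "a \<le> l" "l \<le> c" "d l = r"
    using IVT'[of d a r c] assms by force
  moreover have "l \<noteq> a" using \<open>d l = r\<close> assms(3) by auto
  ultimately show ?thesis using that by force
qed

lemma log_tilt_identity:
  fixes q p w m A S l b :: real
  assumes "q > 0" "p > 0" "w > 0" "m > 0" "A > 0" "S > 0" "l > 0"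
  shows "l * log b (q / (p * w)) - (l - 1) * log b (q / (p * m)) + l * log b S
     = log b (q / (p * w powr l * A powr (1/l - 1) / S)) + (l - 1) * log b (m / (A powr (1/l) / S))"
  using assms by (simp add: log_mult log_divide_pos log_powr field_simps)

locale finite_channel =
  fixes P :: "'x::finite \<Rightarrow> real" and W :: "'x \<Rightarrow> 'y::finite \<Rightarrow> real"
  assumes is_dist_P: "is_dist P" and is_channel_W: "is_channel W"
begin

lemma P_nonneg: "P x \<ge> 0" and W_nonneg: "W x y \<ge> 0" and sum_W: "sum (W x) UNIV = 1"
  using is_dist_P is_channel_W by (auto simp: is_dist_def is_channel_def)

lemma joint_pos_iff: "joint P W (x, y) > 0 \<longleftrightarrow> P x > 0 \<and> W x y > 0"
  using P_nonneg[of x] W_nonneg[of x y] by (auto simp: joint_def zero_less_mult_iff)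

lemma is_dist_joint: "is_dist (joint P W)"
proof -
  have "sum (joint P W) UNIV = (\<Sum>x\<in>UNIV. \<Sum>y\<in>UNIV. joint P W (x, y))"
    by (simp add: sum.cartesian_product)
  also have "\<dots> = (\<Sum>x\<in>UNIV. P x * sum (W x) UNIV)"
    by (simp add: joint_def sum_distrib_left)
  also have "\<dots> = 1"
    using is_dist_P sum_W by (simp add: is_dist_def)
  finally show ?thesis
    using P_nonneg W_nonneg by (simp add: is_dist_def joint_def)
qed

(* tilt_mass and tilt_norm are the inner and outer sums in Sibson's formula; tilted l is the
   minimiser of D(Q||P_XY) - (l-1)/l D(Q||P_X Q_Y), with Y-marginal tilt_out l. *)
definition tilt_mass :: "real \<Rightarrow> 'y \<Rightarrow> real" where
  "tilt_mass l y = (\<Sum>x\<in>UNIV. P x * W x y powr l)"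

definition tilt_norm :: "real \<Rightarrow> real" where
  "tilt_norm l = (\<Sum>y\<in>UNIV. tilt_mass l y powr (1/l))"

definition tilt_out :: "real \<Rightarrow> 'y \<Rightarrow> real" where
  "tilt_out l y = tilt_mass l y powr (1/l) / tilt_norm l"

definition tilted :: "real \<Rightarrow> 'x \<times> 'y \<Rightarrow> real" where
  "tilted l = (\<lambda>(x, y). P x * W x y powr l * tilt_mass l y powr (1/l - 1) / tilt_norm l)"

lemma tilt_mass_nonneg: "tilt_mass l y \<ge> 0"
  unfolding tilt_mass_def by (intro sum_nonneg mult_nonneg_nonneg P_nonneg) auto

lemma tilt_mass_pos_iff: "tilt_mass l y > 0 \<longleftrightarrow> (\<exists>x. joint P W (x, y) > 0)"
proof
  assume "tilt_mass l y > 0"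
  then obtain x where "P x * W x y powr l \<noteq> 0"
    unfolding tilt_mass_def by (metis (no_types, lifting) less_irrefl sum.neutral)
  then show "\<exists>x. joint P W (x, y) > 0"
    using P_nonneg[of x] W_nonneg[of x y] joint_pos_iff[of x y] by auto
next
  assume "\<exists>x. joint P W (x, y) > 0"
  then obtain x where "P x > 0" "W x y > 0" using joint_pos_iff by blast
  then have "0 < P x * W x y powr l" by simp
  also have "\<dots> \<le> tilt_mass l y"
    unfolding tilt_mass_def
    by (rule member_le_sum[of x UNIV "\<lambda>x. P x * W x y powr l"])
       (auto intro: mult_nonneg_nonneg P_nonneg)
  finally show "tilt_mass l y > 0" .
qed

lemma tilt_norm_pos: "tilt_norm l > 0"
proof -
  obtain a where "joint P W a \<noteq> 0"
    using is_dist_joint by (metis is_dist_def sum.neutral zero_neq_one)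
  then obtain x y where "joint P W (x, y) > 0"
    using is_dist_joint by (cases a) (auto simp: is_dist_def less_le)
  then have "tilt_mass l y > 0" using tilt_mass_pos_iff by blast
  then have "0 < tilt_mass l y powr (1/l)" by simp
  also have "\<dots> \<le> tilt_norm l" unfolding tilt_norm_def by (rule member_le_sum) auto
  finally show ?thesis .
qed

lemma tilted_nonneg: "tilted l a \<ge> 0"
  using tilt_norm_pos[of l] tilt_mass_nonneg[of l] P_nonneg W_nonneg
  by (auto simp: tilted_def split: prod.split)

lemma tilted_pos_iff: "tilted l a > 0 \<longleftrightarrow> joint P W a > 0"
proof (cases a)
  case (Pair x y)
  have "tilted l (x, y) > 0 \<longleftrightarrow> P x > 0 \<and> W x y > 0 \<and> tilt_mass l y > 0"
    using P_nonneg[of x] W_nonneg[of x y] tilt_mass_nonneg[of l y] tilt_norm_pos[of l]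
    by (auto simp: tilted_def zero_less_mult_iff less_le)
  then show ?thesis using Pair joint_pos_iff tilt_mass_pos_iff by blast
qed

lemma marg_Y_tilted: "marg_Y (tilted l) = tilt_out l"
proof
  fix y
  have "marg_Y (tilted l) y = tilt_mass l y * tilt_mass l y powr (1/l - 1) / tilt_norm l"
    by (simp add: marg_Y_def tilted_def tilt_mass_def sum_distrib_right sum_divide_distrib)
  also have "\<dots> = tilt_out l y"
    using tilt_mass_nonneg[of l y]
    by (cases "tilt_mass l y = 0") (simp_all add: tilt_out_def powr_mult_base)
  finally show "marg_Y (tilted l) y = tilt_out l y" .
qed

lemma tilt_out_nonneg: "tilt_out l y \<ge> 0"
  using tilt_norm_pos[of l] by (simp add: tilt_out_def)

lemma sum_tilt_out: "sum (tilt_out l) UNIV = 1"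
  using tilt_norm_pos[of l] by (simp add: tilt_out_def tilt_norm_def sum_divide_distrib[symmetric])

lemma is_dist_tilted: "is_dist (tilted l)"
  using sum_marg_Y[of "tilted l" "\<lambda>_. 1"] tilted_nonneg sum_tilt_out
  by (simp add: is_dist_def marg_Y_tilted)

lemma prod_marg_Y_pos:
  assumes "\<And>a. Q a \<ge> 0" "Q (x, y) > 0" "joint P W (x, y) > 0"
  shows "prod_dist P (marg_Y Q) (x, y) > 0"
  using assms le_marg_Y[of Q x y] joint_pos_iff[of x y] by (simp add: prod_dist_def)

lemma log_tilt_decomposition:
  assumes "q > 0" "m > 0" "joint P W (x, y) > 0" "l > 0"
  shows "l * log b (q / joint P W (x, y)) - (l - 1) * log b (q / (P x * m))
      + l * log b (tilt_norm l)
    = log b (q / tilted l (x, y)) + (l - 1) * log b (m / tilt_out l y)"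
proof -
  have "P x > 0" "W x y > 0" "tilt_mass l y > 0"
    using assms(3) joint_pos_iff tilt_mass_pos_iff by auto
  then show ?thesis
    using log_tilt_identity[of q "P x" "W x y" m "tilt_mass l y" "tilt_norm l" l b]
      assms tilt_norm_pos
    by (simp add: joint_def tilted_def tilt_out_def)
qed

lemma tilt_decomposition:
  assumes Q: "is_dist Q" and l: "l > 0" and abs_cont: "\<forall>a. Q a > 0 \<longrightarrow> joint P W a > 0"
  shows "l * rel_ent_sum b Q (joint P W) - (l - 1) * rel_ent_sum b Q (prod_dist P (marg_Y Q))
      + l * log b (tilt_norm l)
    = rel_ent_sum b Q (tilted l) + (l - 1) * rel_ent_sum b (marg_Y Q) (tilt_out l)"
proof -
  define Sp where "Sp = {a. Q a > 0}"
  define m where "m = marg_Y Q"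
  have Q_nonneg: "\<And>a. Q a \<ge> 0" and sum_Sp: "sum Q Sp = 1"
    using Q sum_over_support[of Q "\<lambda>_. 1"] by (auto simp: is_dist_def Sp_def)
  have pointwise: "l * log b (Q a / joint P W a) - (l - 1) * log b (Q a / prod_dist P m a)
        + l * log b (tilt_norm l)
      = log b (Q a / tilted l a) + (l - 1) * log b (m (snd a) / tilt_out l (snd a))"
    if "a \<in> Sp" for a
  proof (cases a)
    case (Pair x y)
    then have "Q (x, y) > 0" "joint P W (x, y) > 0" using that abs_cont by (auto simp: Sp_def)
    moreover have "m y > 0" using le_marg_Y[of Q x y] Q_nonneg calculation by (simp add: m_def)
    ultimately show ?thesis
      using log_tilt_decomposition l by (simp add: Pair prod_dist_def)
  qed
  have "(\<Sum>a\<in>Sp. Q a * (l * log b (Q a / joint P W a) - (l - 1) * log b (Q a / prod_dist P m a)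
        + l * log b (tilt_norm l)))
    = l * rel_ent_sum b Q (joint P W) - (l - 1) * rel_ent_sum b Q (prod_dist P m)
      + l * log b (tilt_norm l) * sum Q Sp"
    by (simp add: rel_ent_sum_def Sp_def algebra_simps sum.distrib sum_subtractf sum_distrib_left
        sum_distrib_right)
  then have "l * rel_ent_sum b Q (joint P W) - (l - 1) * rel_ent_sum b Q (prod_dist P m)
      + l * log b (tilt_norm l)
    = (\<Sum>a\<in>Sp. Q a * (l * log b (Q a / joint P W a) - (l - 1) * log b (Q a / prod_dist P m a)
        + l * log b (tilt_norm l)))"
    using sum_Sp by simp
  also have "\<dots> = (\<Sum>a\<in>Sp. Q a * (log b (Q a / tilted l a)
      + (l - 1) * log b (m (snd a) / tilt_out l (snd a))))"
    using pointwise by simp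
  also have "\<dots> = rel_ent_sum b Q (tilted l) + (l - 1) * rel_ent_sum b m (tilt_out l)"
    unfolding m_def rel_ent_sum_marg_Y[OF Q_nonneg]
    by (simp add: rel_ent_sum_def Sp_def distrib_left sum.distrib sum_distrib_left mult.left_commute)
  finally show ?thesis by (simp add: m_def)
qed

lemma tilt_out_pos_iff: "tilt_out l y > 0 \<longleftrightarrow> tilt_mass l y > 0"
  using tilt_norm_pos[of l] tilt_mass_nonneg[of l y] by (auto simp: tilt_out_def less_le)

lemma tilt_lower_bound:
  assumes b: "b > 1" and Q: "is_dist Q" and l: "l \<ge> 1"
    and abs_cont: "\<forall>a. Q a > 0 \<longrightarrow> joint P W a > 0"
  shows "rel_ent_sum b Q (joint P W) - (l - 1) / l * rel_ent_sum b Q (prod_dist P (marg_Y Q))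
    \<ge> - log b (tilt_norm l)"
proof -
  have "0 \<le> rel_ent_sum b Q (tilted l)"
    using tilted_nonneg is_dist_tilted[of l] abs_cont tilted_pos_iff
    by (intro rel_ent_sum_nonneg[OF b Q]) (auto simp: is_dist_def)
  moreover have "0 \<le> rel_ent_sum b (marg_Y Q) (tilt_out l)"
  proof (rule rel_ent_sum_nonneg[OF b is_dist_marg_Y[OF Q] tilt_out_nonneg])
    show "sum (tilt_out l) UNIV \<le> 1" by (simp add: sum_tilt_out)
    show "\<forall>y. marg_Y Q y > 0 \<longrightarrow> tilt_out l y > 0"
      using marg_Y_pos_imp abs_cont tilt_mass_pos_iff tilt_out_pos_iff by blast
  qed
  ultimately have "0 \<le> l * rel_ent_sum b Q (joint P W)
      - (l - 1) * rel_ent_sum b Q (prod_dist P (marg_Y Q)) + l * log b (tilt_norm l)"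
    using tilt_decomposition[OF Q _ abs_cont, of l b] l by simp
  then show ?thesis using l by (simp add: field_simps)
qed

lemma tilted_attains_bound:
  assumes "l > 0"
  shows "rel_ent_sum b (tilted l) (joint P W)
      - (l - 1) / l * rel_ent_sum b (tilted l) (prod_dist P (tilt_out l))
    = - log b (tilt_norm l)"
proof -
  have "l * rel_ent_sum b (tilted l) (joint P W)
      - (l - 1) * rel_ent_sum b (tilted l) (prod_dist P (tilt_out l)) + l * log b (tilt_norm l) = 0"
    using tilt_decomposition[OF is_dist_tilted assms, of l b] tilted_pos_iff
    by (simp add: marg_Y_tilted rel_ent_sum_self)
  then show ?thesis using assms by (simp add: field_simps)
qed

lemma tilt_norm_1: "tilt_norm 1 = 1"
proof -
  have "tilt_mass 1 y powr (1/1) = marg_Y (joint P W) y" for y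
    using W_nonneg tilt_mass_nonneg[of 1 y] by (simp add: tilt_mass_def marg_Y_def joint_def)
  then have "tilt_norm 1 = sum (marg_Y (joint P W)) UNIV"
    by (simp only: tilt_norm_def)
  also have "\<dots> = 1"
    using is_dist_joint is_dist_marg_Y is_dist_def by blast
  finally show ?thesis .
qed

lemma tilted_1: "tilted 1 = joint P W"
proof
  fix a :: "'x \<times> 'y"
  show "tilted 1 a = joint P W a"
  proof (cases a)
    case (Pair x y)
    have "joint P W (x, y) = 0" if "tilt_mass 1 y = 0"
      using that tilt_mass_pos_iff[of 1 y] is_dist_joint by (auto simp: is_dist_def less_le)
    then show ?thesis
      using W_nonneg[of x y] by (auto simp: Pair tilted_def tilt_norm_1 joint_def)
  qed
qed

definition tilt_info :: "real \<Rightarrow> real \<Rightarrow> real" where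
  "tilt_info b l = rel_ent_sum b (tilted l) (prod_dist P (tilt_out l))"

lemma mut_info_eq_tilt_info: "mut_info b P W = ereal (tilt_info b 1)"
proof -
  have "\<forall>a. joint P W a > 0 \<longrightarrow> prod_dist P (marg_Y (joint P W)) a > 0"
    using prod_marg_Y_pos is_dist_joint by (auto simp: is_dist_def)
  then show ?thesis
    using marg_Y_tilted[of 1]
    by (simp add: mut_info_def rel_ent_eq_rel_ent_sum tilt_info_def tilted_1)
qed

lemma sibson_eq_log_tilt_norm:
  "l \<noteq> 1 \<Longrightarrow> sibson b l P W = ereal (l / (l - 1) * log b (tilt_norm l))"
  by (simp add: sibson_def tilt_norm_def tilt_mass_def)

lemma continuous_on_tilt_mass: "continuous_on {0<..} (\<lambda>l. tilt_mass l y)"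
  unfolding tilt_mass_def
  by (intro continuous_on_sum continuous_on_mult continuous_on_const continuous_on_powr'
      continuous_on_id) (auto simp: W_nonneg)

lemma continuous_on_tilt_norm: "continuous_on {0<..} tilt_norm"
  unfolding tilt_norm_def
  by (intro continuous_on_sum continuous_on_powr' continuous_on_tilt_mass continuous_on_divide
      continuous_on_const continuous_on_id) (auto simp: tilt_mass_nonneg)

lemma continuous_on_tilt_info:
  assumes "b > 1"
  shows "continuous_on {0<..} (tilt_info b)"
proof -
  have support: "tilt_info b = (\<lambda>l. \<Sum>a\<in>{a. joint P W a > 0}.
      tilted l a * log b (tilted l a / prod_dist P (tilt_out l) a))"
    by (simp add: fun_eq_iff tilt_info_def rel_ent_sum_def tilted_pos_iff)
  have terms: "continuous_on {0<..}
      (\<lambda>l. tilted l a * log b (tilted l a / prod_dist P (tilt_out l) a))"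
    if "joint P W a > 0" for a
  proof (cases a)
    case (Pair x y)
    have "P x > 0" "W x y > 0" "\<And>l. tilt_mass l y > 0"
      using that Pair joint_pos_iff tilt_mass_pos_iff by auto
    moreover have "tilted l a = P x * W x y powr l * tilt_mass l y powr (1/l - 1) / tilt_norm l"
      and "prod_dist P (tilt_out l) a = P x * (tilt_mass l y powr (1/l) / tilt_norm l)" for l
      by (simp_all add: Pair tilted_def prod_dist_def tilt_out_def)
    ultimately show ?thesis
      using tilt_norm_pos assms
      by (simp only:) (intro continuous_intros continuous_on_tilt_mass continuous_on_tilt_norm;
          auto simp: less_imp_neq[symmetric])
  qed
  show ?thesis unfolding support by (rule continuous_on_sum) (use terms in blast)
qed

definition primal_obj :: "real \<Rightarrow> real \<Rightarrow> ('x \<times> 'y \<Rightarrow> real) \<Rightarrow> ereal" where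
  "primal_obj b R Q = rel_ent b Q (joint P W)
     + ereal (1/2) * max 0 (ereal R - rel_ent b Q (prod_dist P (marg_Y Q)))"

definition dual_obj :: "real \<Rightarrow> real \<Rightarrow> real \<Rightarrow> ereal" where
  "dual_obj b R l = ereal ((l - 1) / l) * (ereal R - sibson b l P W)"

lemma dual_obj_eq:
  assumes "l \<ge> 1"
  shows "dual_obj b R l = ereal ((l - 1) / l * R - log b (tilt_norm l))"
proof (cases "l = 1")
  case True
  then show ?thesis by (simp add: dual_obj_def tilt_norm_1 zero_ereal_def[symmetric])
next
  case False
  then have "(l - 1) / l * (R - l / (l - 1) * log b (tilt_norm l))
      = (l - 1) / l * R - log b (tilt_norm l)"
    using assms by (simp add: field_simps)
  with False show ?thesis by (simp add: dual_obj_def sibson_eq_log_tilt_norm)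
qed

lemma primal_obj_eq:
  assumes "is_dist Q" and abs_cont: "\<forall>a. Q a > 0 \<longrightarrow> joint P W a > 0"
  shows "primal_obj b R Q = ereal (rel_ent_sum b Q (joint P W)
    + 1/2 * max 0 (R - rel_ent_sum b Q (prod_dist P (marg_Y Q))))"
proof -
  have "\<forall>a. Q a > 0 \<longrightarrow> prod_dist P (marg_Y Q) a > 0"
    using prod_marg_Y_pos assms by (auto simp: is_dist_def)
  then show ?thesis using abs_cont by (simp add: primal_obj_def rel_ent_eq_rel_ent_sum max_def)
qed

lemma dual_obj_le_primal_obj:
  assumes b: "b > 1" and l: "l \<in> {1..2}" and Q: "is_dist Q"
  shows "dual_obj b R l \<le> primal_obj b R Q"
proof (cases "\<forall>a. Q a > 0 \<longrightarrow> joint P W a > 0")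
  case False
  have "ereal (1/2) * max 0 (ereal R - rel_ent b Q (prod_dist P (marg_Y Q))) \<ge> 0"
    by (intro ereal_0_le_mult) auto
  then have "primal_obj b R Q = \<infinity>"
    using rel_ent_not_abs_cont[OF False] by (simp add: primal_obj_def)
  then show ?thesis by simp
next
  case True
  define D1 where "D1 = rel_ent_sum b Q (joint P W)"
  define D2 where "D2 = rel_ent_sum b Q (prod_dist P (marg_Y Q))"
  have "(l - 1) / l * R - log b (tilt_norm l) \<le> D1 + (l - 1) / l * (R - D2)"
    using tilt_lower_bound[OF b Q _ True, of l] l by (simp add: D1_def D2_def algebra_simps)
  also have "\<dots> \<le> D1 + 1/2 * max 0 (R - D2)"
    using weighted_le_half_pos_part[of "(l - 1) / l" "R - D2"] l by (simp add: field_simps)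
  finally show ?thesis
    using l by (simp add: dual_obj_eq primal_obj_eq[OF Q True] D1_def D2_def)
qed

(* If tilt_info b l = R the positive part vanishes; if l = 2 the weight (l-1)/l is 1/2. *)
lemma primal_obj_tilted:
  assumes "0 < l" "tilt_info b l \<le> R" "tilt_info b l = R \<or> l = 2"
  shows "primal_obj b R (tilted l) = ereal ((l - 1) / l * R - log b (tilt_norm l))"
proof -
  have "rel_ent_sum b (tilted l) (joint P W) + 1/2 * max 0 (R - tilt_info b l)
      = (l - 1) / l * R - log b (tilt_norm l)"
    using tilted_attains_bound[OF assms(1), of b] assms(2,3)
    by (auto simp: tilt_info_def algebra_simps)
  then show ?thesis
    using tilted_pos_iff
    by (simp add: primal_obj_eq[OF is_dist_tilted] marg_Y_tilted tilt_info_def)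
qed

end

theorem proposition1:
  fixes b :: real and R :: real
    and P :: "'x::finite \<Rightarrow> real" and W :: "'x \<Rightarrow> 'y::finite \<Rightarrow> real"
  assumes "b > 1"
    and "is_dist P" and "is_channel W"
    and "ereal R > mut_info b P W"
  shows "\<exists>v::real.
     (\<exists>Q. is_dist Q \<and>
        rel_ent b Q (joint P W)
          + ereal (1/2) * max 0 (ereal R - rel_ent b Q (prod_dist P (marg_Y Q))) = ereal v)
   \<and> (\<forall>Q. is_dist Q \<longrightarrow>
        ereal v \<le> rel_ent b Q (joint P W)
          + ereal (1/2) * max 0 (ereal R - rel_ent b Q (prod_dist P (marg_Y Q))))
   \<and> (\<exists>l\<in>{1..2}. ereal ((l - 1) / l) * (ereal R - sibson b l P W) = ereal v)
   \<and> (\<forall>l\<in>{1..2}. ereal ((l - 1) / l) * (ereal R - sibson b l P W) \<le> ereal v)"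
proof -
  interpret finite_channel P W using assms(2,3) by unfold_locales
  have cont: "continuous_on {1..2} (tilt_info b)"
    using continuous_on_tilt_info[OF assms(1)] by (rule continuous_on_subset) auto
  have below: "tilt_info b 1 < R" using assms(4) by (simp add: mut_info_eq_tilt_info)
  obtain l where l: "1 < l" "l \<le> 2" "tilt_info b l \<le> R" "tilt_info b l = R \<or> l = 2"
    by (rule exists_crossing_or_right_end[OF cont _ below]) auto
  define v where "v = (l - 1) / l * R - log b (tilt_norm l)"
  have "primal_obj b R (tilted l) = ereal v" and "dual_obj b R l = ereal v"
    using primal_obj_tilted[of l b R] dual_obj_eq[of l b R] l by (simp_all add: v_def)
  then have "(\<exists>Q. is_dist Q \<and> primal_obj b R Q = ereal v)
    \<and> (\<forall>Q. is_dist Q \<longrightarrow> ereal v \<le> primal_obj b R Q)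
    \<and> (\<exists>l\<in>{1..2}. dual_obj b R l = ereal v) \<and> (\<forall>l\<in>{1..2}. dual_obj b R l \<le> ereal v)"
    using is_dist_tilted dual_obj_le_primal_obj[OF assms(1)] l by (metis atLeastAtMost_iff less_le)
  then show ?thesis unfolding primal_obj_def dual_obj_def by blast
qed

end
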